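(* Let $m\ge2$ and let $W$ be as in the context. Suppose the nonzero eigenvalues of $W$ (counted with algebraic multiplicity) are $\pm i\lambda_1,\dots,\pm i\lambda_r$ with $\lambda_k>0$ (the eigenvalue $0$ then having multiplicity $d-2r$). Then $$\sqrt{\det\mathcal{O}_{m-1}}=m^{\frac d2-r}\prod_{k=1}^r\frac{(1+\lambda_k)^m-(1-\lambda_k)^m}{2\lambda_k}.$$
   Context: $\mathbb{B}_n$ carries the Riemannian metric $\mathring b$ induced by the Bergman Hermitian metric, the standard complex structure $J$, and $\omega_p(\xi,\nu)=\mathring b_p(\xi,J\nu)$. $\Gamma\subseteq\mathbb{B}_n$ is an embedded submanifold of dimension $d$ with inclusion $\iota$, $\gamma:B(0,1)\subset\mathbb{R}^d\to\Gamma$ a parametrization with $p=\gamma(t)$, $G=(g_{jk}(p))$ with $g_{jk}(p)=\mathring b_p(D_p\iota\,\partial_{t_j},D_p\iota\,\partial_{t_k})$ and $H=(h_{jk}(p))$ with $h_{jk}(p)=\omega_p(D_p\iota\,\partial_{t_j},D_p\iota\,\partial_{t_k})$, and $W=G^{-1}H$ (a $d\times d$ real matrix, skew-adjoint with respect to $G$, so its nonzero eigenvalues are purely imaginary in conjugate pairs). $\mathcal{O}_{m-1}$ is the $(m-1)d\times(m-1)d$ complex matrix which, as an $(m-1)\times(m-1)$ block matrix with $d\times d$ blocks, is block tridiagonal with diagonal blocks $2I$, superdiagonal blocks $-I-iW$, subdiagonal blocks $-I+iW$, and all other blocks zero. The square root is the positive one. *)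

theory Defs
  imports Complex_Main "Jordan_Normal_Form.Char_Poly"
begin

text \<open>The block tridiagonal matrix O_{m-1}: (m-1) x (m-1) blocks of size d x d,
  diagonal blocks 2I, superdiagonal blocks -I - iW, subdiagonal blocks -I + iW.\<close>
definition O_mat :: "nat \<Rightarrow> nat \<Rightarrow> real mat \<Rightarrow> complex mat" where
  "O_mat d m W = mat ((m - 1) * d) ((m - 1) * d) (\<lambda>(i, j).
     let a = i div d; b = j div d; p = i mod d; q = j mod d;
         \<delta> = (if p = q then 1 else 0) :: complex
     in if a = b then 2 * \<delta>
        else if b = a + 1 then - \<delta> - \<i> * complex_of_real (W $$ (p, q))
        else if a = b + 1 then - \<delta> + \<i> * complex_of_real (W $$ (p, q))
        else 0)"

end

theory Submission
  imports Defs "Jordan_Normal_Form.Schur_Decomposition"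
begin

(* Write O_{m-1} as the Kronecker pencil T\<^sub>0 \<otimes> I + T\<^sub>1 \<otimes> W, where T\<^sub>0 and T\<^sub>1 are the
   scalar (m-1) x (m-1) tridiagonal matrices with (sub-, main, super-) diagonals
   (-1, 2, -1) and (i, 0, -i).
   Conjugating with a block diagonal Schur transformation replaces W by an upper triangular
   matrix carrying the eigenvalues e of W on its diagonal; after the perfect shuffle of
   indices the pencil becomes block upper triangular with diagonal blocks T\<^sub>0 + e T\<^sub>1.
   These are tridiagonal Toeplitz matrices, whose determinants obey a three-term recurrence
   solved by the sums \<Sum>k<m. x^k y^(m-1-k) with x, y = 1 \<plusminus> i e. This is m for e = 0 and
   ((1 + \<lambda>)^m - (1 - \<lambda>)^m) / (2 \<lambda>) for e = \<plusminus>i \<lambda>, so det O_{m-1} is a perfect square. *)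

section \<open>Block matrices\<close>

definition block_mat :: "nat \<Rightarrow> nat \<Rightarrow> (nat \<Rightarrow> nat \<Rightarrow> 'a mat) \<Rightarrow> 'a mat" where
  "block_mat d n F = mat (n * d) (n * d) (\<lambda>(i, j). F (i div d) (j div d) $$ (i mod d, j mod d))"

lemma block_mat_carrier [simp]: "block_mat d n F \<in> carrier_mat (n * d) (n * d)"
  and dim_row_block_mat [simp]: "dim_row (block_mat d n F) = n * d"
  and dim_col_block_mat [simp]: "dim_col (block_mat d n F) = n * d"
  by (simp_all add: block_mat_def)

lemma index_block_mat [simp]:
  "i < n * d \<Longrightarrow> j < n * d \<Longrightarrow>
    block_mat d n F $$ (i, j) = F (i div d) (j div d) $$ (i mod d, j mod d)"
  by (simp add: block_mat_def)

lemma block_index_less: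
  assumes "i < n * (d::nat)"
  shows "i div d < n" "i mod d < d"
proof -
  show "i div d < n" using assms by (simp add: less_mult_imp_div_less)
  have "0 < d" using assms by (cases d) auto
  then show "i mod d < d" by simp
qed

lemma index_mult_mat_sum:
  assumes "A \<in> carrier_mat n k" "B \<in> carrier_mat k m" "i < n" "j < m"
  shows "(A * B) $$ (i, j) = (\<Sum>l<k. A $$ (i, l) * B $$ (l, j))"
  using assms by (auto simp: scalar_prod_def atLeast0LessThan intro!: sum.cong)

lemma sum_lessThan_mult:
  fixes g :: "nat \<Rightarrow> 'a::comm_monoid_add"
  shows "(\<Sum>k<n * d. g k) = (\<Sum>c<n. \<Sum>r<d. g (c * d + r))"
proof -
  have "(\<Sum>k<n * d. g k) = (\<Sum>c<n. sum g {c * d..<c * d + d})"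
    using sum.nat_group[of g d n] by simp
  also have "\<dots> = (\<Sum>c<n. \<Sum>r<d. g (c * d + r))"
  proof (rule sum.cong[OF refl])
    fix c
    show "sum g {c * d..<c * d + d} = (\<Sum>r<d. g (c * d + r))"
      using sum.shift_bounds_nat_ivl[of g 0 "c * d" d] by (simp add: atLeast0LessThan add.commute)
  qed
  finally show ?thesis .
qed

lemma block_index_mult_add:
  assumes "c < n" "r < (d::nat)"
  shows "c * d + r < n * d" "(c * d + r) div d = c" "(c * d + r) mod d = r"
proof -
  have "c * d + r < Suc c * d" using assms by simp
  also have "\<dots> \<le> n * d" using assms by (intro mult_right_mono) auto
  finally show "c * d + r < n * d" .
qed (use assms in auto)

lemma index_mult_block_mat:
  assumes F: "\<And>a b. a < n \<Longrightarrow> b < n \<Longrightarrow> F a b \<in> carrier_mat d d"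
    and G: "\<And>a b. a < n \<Longrightarrow> b < n \<Longrightarrow> G a b \<in> carrier_mat d d"
    and i: "i < n * d" and j: "j < n * d"
  shows "(block_mat d n F * block_mat d n G) $$ (i, j)
    = (\<Sum>c<n. (F (i div d) c * G c (j div d)) $$ (i mod d, j mod d))"
proof -
  note ii = block_index_less[OF i] and jj = block_index_less[OF j]
  have "(block_mat d n F * block_mat d n G) $$ (i, j)
      = (\<Sum>k<n * d. block_mat d n F $$ (i, k) * block_mat d n G $$ (k, j))"
    by (rule index_mult_mat_sum) (use i j in auto)
  also have "\<dots> = (\<Sum>c<n. \<Sum>r<d. F (i div d) c $$ (i mod d, r) * G c (j div d) $$ (r, j mod d))"
    unfolding sum_lessThan_mult using i j block_index_mult_add by (intro sum.cong refl) auto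
  also have "\<dots> = (\<Sum>c<n. (F (i div d) c * G c (j div d)) $$ (i mod d, j mod d))"
    by (intro sum.cong refl, subst index_mult_mat_sum[of _ d d]) (use F G ii jj in auto)
  finally show ?thesis .
qed

definition block_diag_mat :: "nat \<Rightarrow> nat \<Rightarrow> 'a mat \<Rightarrow> 'a::zero mat" where
  "block_diag_mat d n P = block_mat d n (\<lambda>a b. if a = b then P else 0\<^sub>m d d)"

lemma block_diag_mat_carrier [simp]: "block_diag_mat d n P \<in> carrier_mat (n * d) (n * d)"
  by (simp add: block_diag_mat_def)

lemma block_diag_mult_block_mat:
  fixes P :: "'a::semiring_0 mat"
  assumes P: "P \<in> carrier_mat d d" and F: "\<And>a b. a < n \<Longrightarrow> b < n \<Longrightarrow> F a b \<in> carrier_mat d d"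
  shows "block_diag_mat d n P * block_mat d n F = block_mat d n (\<lambda>a b. P * F a b)"
  unfolding block_diag_mat_def
proof (rule eq_matI)
  fix i j assume "i < dim_row (block_mat d n (\<lambda>a b. P * F a b))" "j < dim_col (block_mat d n (\<lambda>a b. P * F a b))"
  then have i: "i < n * d" and j: "j < n * d" by auto
  note ii = block_index_less[OF i] and jj = block_index_less[OF j]
  have "((if i div d = c then P else 0\<^sub>m d d) * F c (j div d)) $$ (i mod d, j mod d)
    = (if i div d = c then (P * F c (j div d)) $$ (i mod d, j mod d) else 0)" if "c < n" for c
    using that P F[of c "j div d"] ii jj by auto
  then show "(block_mat d n (\<lambda>a b. if a = b then P else 0\<^sub>m d d) * block_mat d n F) $$ (i, j)
    = block_mat d n (\<lambda>a b. P * F a b) $$ (i, j)"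
    using P F ii i j by (subst index_mult_block_mat[OF _ F i j]) (auto simp: sum.delta')
qed auto

lemma block_mat_mult_block_diag:
  fixes Q :: "'a::semiring_0 mat"
  assumes Q: "Q \<in> carrier_mat d d" and F: "\<And>a b. a < n \<Longrightarrow> b < n \<Longrightarrow> F a b \<in> carrier_mat d d"
  shows "block_mat d n F * block_diag_mat d n Q = block_mat d n (\<lambda>a b. F a b * Q)"
  unfolding block_diag_mat_def
proof (rule eq_matI)
  fix i j assume "i < dim_row (block_mat d n (\<lambda>a b. F a b * Q))" "j < dim_col (block_mat d n (\<lambda>a b. F a b * Q))"
  then have i: "i < n * d" and j: "j < n * d" by auto
  note ii = block_index_less[OF i] and jj = block_index_less[OF j]
  have "(F (i div d) c * (if c = j div d then Q else 0\<^sub>m d d)) $$ (i mod d, j mod d)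
    = (if c = j div d then (F (i div d) c * Q) $$ (i mod d, j mod d) else 0)" if "c < n" for c
    using that Q F[of "i div d" c] ii jj by (auto simp: scalar_prod_def)
  then show "(block_mat d n F * block_mat d n (\<lambda>a b. if a = b then Q else 0\<^sub>m d d)) $$ (i, j)
    = block_mat d n (\<lambda>a b. F a b * Q) $$ (i, j)"
    using Q F jj i j by (subst index_mult_block_mat[OF F _ i j]) (auto simp: sum.delta)
qed auto

lemma det_block_mat_upper_triangular:
  fixes F :: "nat \<Rightarrow> nat \<Rightarrow> 'a::idom mat"
  assumes "\<And>a b. a < n \<Longrightarrow> b < n \<Longrightarrow> F a b \<in> carrier_mat d d"
    and "\<And>a b. b < a \<Longrightarrow> a < n \<Longrightarrow> F a b = 0\<^sub>m d d"
  shows "det (block_mat d n F) = (\<Prod>a<n. det (F a a))"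
  using assms
proof (induction n arbitrary: F)
  case 0
  then show ?case by (simp add: block_mat_def det_def)
next
  case (Suc n)
  define F' where "F' a b = F (Suc a) (Suc b)" for a b
  define R where "R = mat d (n * d) (\<lambda>(i, j). F 0 (Suc (j div d)) $$ (i, j mod d))"
  have F00: "F 0 0 \<in> carrier_mat d d" using Suc.prems(1) by simp
  have split: "block_mat d (Suc n) F = four_block_mat (F 0 0) R (0\<^sub>m (n * d) d) (block_mat d n F')"
  proof (rule eq_matI)
    fix i j assume "i < dim_row (four_block_mat (F 0 0) R (0\<^sub>m (n * d) d) (block_mat d n F'))"
      "j < dim_col (four_block_mat (F 0 0) R (0\<^sub>m (n * d) d) (block_mat d n F'))"
    then have i: "i < d + n * d" and j: "j < d + n * d" using F00 by auto
    have shift: "k div d = Suc ((k - d) div d)" "k mod d = (k - d) mod d" if "d \<le> k" "k < d + n * d" for k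
    proof -
      have "0 < d" using that by (cases d) auto
      with that show "k div d = Suc ((k - d) div d)" by (simp add: le_div_geq)
      show "k mod d = (k - d) mod d" using that(1) by (rule le_mod_geq)
    qed
    show "block_mat d (Suc n) F $$ (i, j) = four_block_mat (F 0 0) R (0\<^sub>m (n * d) d) (block_mat d n F') $$ (i, j)"
      using i j Suc.prems shift[of i] shift[of j] block_index_less[of "i - d" n d] block_index_less[of "j - d" n d]
        carrier_matD[OF F00]
      by (cases "i < d"; cases "j < d") (auto simp: R_def F'_def)
  qed (use F00 in auto)
  have "det (block_mat d (Suc n) F) = det (F 0 0) * det (block_mat d n F')"
    unfolding split using F00 by (intro det_four_block_mat_lower_left_zero) (auto simp: R_def)
  also have "det (block_mat d n F') = (\<Prod>a<n. det (F' a a))"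
    using Suc.prems by (intro Suc.IH) (auto simp: F'_def)
  finally show ?case by (simp only: F'_def prod.lessThan_Suc_shift)
qed

lemma det_block_diag_mat:
  fixes P :: "'a::idom mat"
  assumes "P \<in> carrier_mat d d"
  shows "det (block_diag_mat d n P) = det P ^ n"
  unfolding block_diag_mat_def using assms by (subst det_block_mat_upper_triangular) auto

lemma det_block_mat_similar:
  fixes P Q :: "'a::idom mat"
  assumes P: "P \<in> carrier_mat d d" and Q: "Q \<in> carrier_mat d d" and PQ: "P * Q = 1\<^sub>m d"
    and F: "\<And>a b. a < n \<Longrightarrow> b < n \<Longrightarrow> F a b \<in> carrier_mat d d"
  shows "det (block_mat d n (\<lambda>a b. P * F a b * Q)) = det (block_mat d n F)"
proof -
  have "block_mat d n (\<lambda>a b. P * F a b * Q) = block_diag_mat d n P * block_mat d n F * block_diag_mat d n Q"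
    using P Q F by (simp add: block_diag_mult_block_mat block_mat_mult_block_diag[where F = "\<lambda>a b. P * F a b"])
  also have "det \<dots> = (det P * det Q) ^ n * det (block_mat d n F)"
    using P Q by (simp add: det_mult[OF mult_carrier_mat[OF block_diag_mat_carrier block_mat_carrier] block_diag_mat_carrier]
        det_mult[OF block_diag_mat_carrier block_mat_carrier] det_block_diag_mat power_mult_distrib)
  also have "det P * det Q = 1"
    using det_mult[OF P Q] PQ by simp
  finally show ?thesis by simp
qed

lemma det_permute_rows_cols:
  fixes A :: "'a::comm_ring_1 mat"
  assumes A: "A \<in> carrier_mat n n" and p: "p permutes {0..<n}"
  shows "det (mat n n (\<lambda>(i, j). A $$ (p i, p j))) = det A"
proof -
  define B where "B = mat n n (\<lambda>(i, j). A $$ (p i, j))"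
  have B: "B \<in> carrier_mat n n" by (simp add: B_def)
  have p_less: "p i < n" if "i < n" for i
    using that p by (meson atLeastLessThan_iff permutes_in_image zero_le)
  have "mat n n (\<lambda>(i, j). A $$ (p i, p j)) = transpose_mat (mat n n (\<lambda>(i, j). transpose_mat B $$ (p i, j)))"
    by (rule eq_matI) (auto simp: B_def p_less)
  then have "det (mat n n (\<lambda>(i, j). A $$ (p i, p j))) = det (mat n n (\<lambda>(i, j). transpose_mat B $$ (p i, j)))"
    by (simp add: det_transpose[OF mat_carrier])
  also have "\<dots> = signof p * det (transpose_mat B)"
    using B p by (intro det_permute_rows) auto
  also have "det (transpose_mat B) = signof p * det A"
    unfolding det_transpose[OF B] unfolding B_def by (rule det_permute_rows[OF A p])
  finally show ?thesis by (simp flip: mult.assoc of_int_mult)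
qed

(* Exchanging the roles of the outer and the inner index (the perfect shuffle) permutes rows
   and columns simultaneously. *)
lemma det_block_mat_swap:
  fixes f :: "nat \<Rightarrow> nat \<Rightarrow> nat \<Rightarrow> nat \<Rightarrow> 'a::comm_ring_1"
  shows "det (block_mat d n (\<lambda>a b. mat d d (\<lambda>(p, q). f a b p q)))
    = det (block_mat n d (\<lambda>p q. mat n n (\<lambda>(a, b). f a b p q)))"
proof -
  define N where "N = n * d"
  define \<sigma> where "\<sigma> i = (if i < N then (i mod n) * d + i div n else i)" for i
  define \<tau> where "\<tau> k = (if k < N then (k mod d) * n + k div d else k)" for k
  have \<sigma>: "\<sigma> i < N" "\<sigma> i div d = i mod n" "\<sigma> i mod d = i div n" "i mod n < n" "i div n < d"
    if "i < N" for i
    using that block_index_less[of i d n] block_index_mult_add[of "i mod n" n "i div n" d]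
    by (simp_all add: \<sigma>_def N_def mult.commute)
  have \<tau>: "\<tau> k < N" "\<tau> k div n = k mod d" "\<tau> k mod n = k div d" if "k < N" for k
    using that block_index_less[of k n d] block_index_mult_add[of "k mod d" d "k div d" n]
    by (simp_all add: \<tau>_def N_def mult.commute)
  have "bij_betw \<sigma> {0..<N} {0..<N}"
  proof (rule bij_betw_byWitness[where f' = \<tau>])
    show "\<forall>i\<in>{0..<N}. \<tau> (\<sigma> i) = i"
      using \<sigma> by (simp add: \<tau>_def)
    show "\<forall>k\<in>{0..<N}. \<sigma> (\<tau> k) = k"
      using \<tau> by (simp add: \<sigma>_def)
  qed (use \<sigma> \<tau> in auto)
  then have perm: "\<sigma> permutes {0..<N}"
    by (rule bij_imp_permutes) (simp add: \<sigma>_def)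
  have "block_mat n d (\<lambda>p q. mat n n (\<lambda>(a, b). f a b p q))
    = mat N N (\<lambda>(i, j). block_mat d n (\<lambda>a b. mat d d (\<lambda>(p, q). f a b p q)) $$ (\<sigma> i, \<sigma> j))"
  proof (rule eq_matI)
    fix i j assume "i < dim_row (mat N N (\<lambda>(i, j). block_mat d n (\<lambda>a b. mat d d (\<lambda>(p, q). f a b p q)) $$ (\<sigma> i, \<sigma> j)))"
      "j < dim_col (mat N N (\<lambda>(i, j). block_mat d n (\<lambda>a b. mat d d (\<lambda>(p, q). f a b p q)) $$ (\<sigma> i, \<sigma> j)))"
    then have i: "i < N" and j: "j < N" by auto
    show "block_mat n d (\<lambda>p q. mat n n (\<lambda>(a, b). f a b p q)) $$ (i, j)
      = mat N N (\<lambda>(i, j). block_mat d n (\<lambda>a b. mat d d (\<lambda>(p, q). f a b p q)) $$ (\<sigma> i, \<sigma> j)) $$ (i, j)"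
      using \<sigma>[OF i] \<sigma>[OF j] i j by (simp add: N_def mult.commute)
  qed (simp_all add: N_def mult.commute)
  then show ?thesis
    using det_permute_rows_cols[OF _ perm, of "block_mat d n (\<lambda>a b. mat d d (\<lambda>(p, q). f a b p q))"]
    by (simp add: N_def)
qed

lemma det_block_pencil_upper_triangular:
  fixes B :: "'a::idom mat" and \<alpha> \<beta> :: "nat \<Rightarrow> nat \<Rightarrow> 'a"
  assumes B: "B \<in> carrier_mat d d" and ut: "upper_triangular B"
  shows "det (block_mat d n (\<lambda>a b. \<alpha> a b \<cdot>\<^sub>m 1\<^sub>m d + \<beta> a b \<cdot>\<^sub>m B))
    = (\<Prod>p<d. det (mat n n (\<lambda>(a, b). \<alpha> a b + \<beta> a b * B $$ (p, p))))"
proof -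
  define f where "f a b p q = \<alpha> a b * (if p = q then 1 else 0) + \<beta> a b * B $$ (p, q)" for a b p q
  have blocks: "(\<lambda>a b. \<alpha> a b \<cdot>\<^sub>m 1\<^sub>m d + \<beta> a b \<cdot>\<^sub>m B) = (\<lambda>a b. mat d d (\<lambda>(p, q). f a b p q))"
    using B by (intro ext eq_matI) (auto simp: f_def)
  have "det (block_mat d n (\<lambda>a b. \<alpha> a b \<cdot>\<^sub>m 1\<^sub>m d + \<beta> a b \<cdot>\<^sub>m B))
      = det (block_mat n d (\<lambda>p q. mat n n (\<lambda>(a, b). f a b p q)))"
    unfolding blocks by (rule det_block_mat_swap)
  also have "\<dots> = (\<Prod>p<d. det (mat n n (\<lambda>(a, b). f a b p p)))"
  proof (rule det_block_mat_upper_triangular)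
    fix p q assume "q < p" "p < d"
    then have "B $$ (p, q) = 0"
      using B ut by (intro upper_triangularD) auto
    with \<open>q < p\<close> show "mat n n (\<lambda>(a, b). f a b p q) = 0\<^sub>m n n"
      by (intro eq_matI) (auto simp: f_def)
  qed simp
  finally show ?thesis by (simp add: f_def)
qed

lemma det_block_pencil:
  fixes A :: "'a::conjugatable_ordered_field mat" and \<alpha> \<beta> :: "nat \<Rightarrow> nat \<Rightarrow> 'a"
  assumes A: "A \<in> carrier_mat d d" and cp: "char_poly A = (\<Prod>e\<leftarrow>es. [:- e, 1:])"
  shows "det (block_mat d n (\<lambda>a b. \<alpha> a b \<cdot>\<^sub>m 1\<^sub>m d + \<beta> a b \<cdot>\<^sub>m A))
    = (\<Prod>e\<leftarrow>es. det (mat n n (\<lambda>(a, b). \<alpha> a b + \<beta> a b * e)))"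
proof -
  obtain B P Q where "schur_decomposition A es = (B, P, Q)"
    by (cases "schur_decomposition A es") auto
  from schur_decomposition[OF A cp this]
  have sim: "similar_mat_wit A B P Q" and ut: "upper_triangular B" and diag: "diag_mat B = es"
    by auto
  from sim A have B: "B \<in> carrier_mat d d" and P: "P \<in> carrier_mat d d" and Q: "Q \<in> carrier_mat d d"
    and PQ: "P * Q = 1\<^sub>m d" and A_eq: "A = P * B * Q"
    unfolding similar_mat_wit_def Let_def by auto
  have "P * (x \<cdot>\<^sub>m 1\<^sub>m d + y \<cdot>\<^sub>m B) * Q = x \<cdot>\<^sub>m 1\<^sub>m d + y \<cdot>\<^sub>m A" for x y
  proof -
    have "P * (x \<cdot>\<^sub>m 1\<^sub>m d + y \<cdot>\<^sub>m B) = P * (x \<cdot>\<^sub>m 1\<^sub>m d) + P * (y \<cdot>\<^sub>m B)"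
      by (rule mult_add_distrib_mat) (use P B in auto)
    also have "\<dots> = x \<cdot>\<^sub>m P + y \<cdot>\<^sub>m (P * B)"
      using P by (simp add: mult_smult_distrib[OF P one_carrier_mat] mult_smult_distrib[OF P B])
    finally have "P * (x \<cdot>\<^sub>m 1\<^sub>m d + y \<cdot>\<^sub>m B) * Q = (x \<cdot>\<^sub>m P + y \<cdot>\<^sub>m (P * B)) * Q"
      by simp
    also have "\<dots> = (x \<cdot>\<^sub>m P) * Q + (y \<cdot>\<^sub>m (P * B)) * Q"
      by (rule add_mult_distrib_mat) (use P B Q in auto)
    also have "\<dots> = x \<cdot>\<^sub>m (P * Q) + y \<cdot>\<^sub>m (P * B * Q)"
      by (simp add: mult_smult_assoc_mat[OF P Q] mult_smult_assoc_mat[OF mult_carrier_mat[OF P B] Q])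
    finally show ?thesis using PQ A_eq by simp
  qed
  then have "det (block_mat d n (\<lambda>a b. \<alpha> a b \<cdot>\<^sub>m 1\<^sub>m d + \<beta> a b \<cdot>\<^sub>m A))
      = det (block_mat d n (\<lambda>a b. \<alpha> a b \<cdot>\<^sub>m 1\<^sub>m d + \<beta> a b \<cdot>\<^sub>m B))"
    using det_block_mat_similar[OF P Q PQ, of n "\<lambda>a b. \<alpha> a b \<cdot>\<^sub>m 1\<^sub>m d + \<beta> a b \<cdot>\<^sub>m B"] B
    by simp
  also have "\<dots> = (\<Prod>p<d. det (mat n n (\<lambda>(a, b). \<alpha> a b + \<beta> a b * B $$ (p, p))))"
    by (rule det_block_pencil_upper_triangular[OF B ut])
  also have "\<dots> = (\<Prod>e\<leftarrow>es. det (mat n n (\<lambda>(a, b). \<alpha> a b + \<beta> a b * e)))"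
    unfolding diag[symmetric] diag_mat_def using B
    by (simp add: prod.distinct_set_conv_list[symmetric] atLeast0LessThan)
  finally show ?thesis .
qed

section \<open>Tridiagonal Toeplitz determinants\<close>

definition tridiag :: "'a \<Rightarrow> 'a \<Rightarrow> 'a \<Rightarrow> nat \<Rightarrow> nat \<Rightarrow> 'a::zero" where
  "tridiag a b c i j = (if i = j then a else if j = Suc i then b else if i = Suc j then c else 0)"

lemma det_tridiag_Suc_Suc:
  fixes a b c :: "'a::comm_ring_1"
  shows "det (mat (Suc (Suc n)) (Suc (Suc n)) (\<lambda>(i, j). tridiag a b c i j))
    = a * det (mat (Suc n) (Suc n) (\<lambda>(i, j). tridiag a b c i j)) - b * c * det (mat n n (\<lambda>(i, j). tridiag a b c i j))"
proof -
  let ?T = "\<lambda>k. mat k k (\<lambda>(i, j). tridiag a b c i j)"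
  let ?A = "?T (Suc (Suc n))"
  have "det ?A = (\<Sum>j<Suc (Suc n). ?A $$ (0, j) * cofactor ?A 0 j)"
    by (rule laplace_expansion_row) auto
  also have "\<dots> = (\<Sum>j\<in>{0, 1}. ?A $$ (0, j) * cofactor ?A 0 j)"
    by (rule sum.mono_neutral_right) (auto simp: tridiag_def)
  also have "\<dots> = a * det (mat_delete ?A 0 0) - b * det (mat_delete ?A 0 1)"
    by (simp add: tridiag_def cofactor_def)
  also have "mat_delete ?A 0 0 = ?T (Suc n)"
    by (rule eq_matI) (auto simp: mat_delete_def tridiag_def)
  also have "mat_delete ?A 0 1 = four_block_mat (mat 1 1 (\<lambda>_. c)) (mat 1 n (\<lambda>(i, j). ?A $$ (1, j + 2))) (0\<^sub>m n 1) (?T n)"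
    by (rule eq_matI) (auto simp: mat_delete_def tridiag_def less_Suc_eq_0_disj)
  also have "det \<dots> = c * det (?T n)"
    by (subst det_four_block_mat_lower_left_zero_col) (auto simp: det_single)
  finally show ?thesis by (simp add: algebra_simps)
qed

lemma sum_power_mult_Suc:
  fixes x y :: "'a::comm_semiring_1"
  shows "(\<Sum>k\<le>Suc n. x ^ k * y ^ (Suc n - k)) = x ^ Suc n + y * (\<Sum>k\<le>n. x ^ k * y ^ (n - k))"
  by (simp add: sum_distrib_left Suc_diff_le mult.left_commute add.commute)

lemma det_tridiag:
  fixes a b c x y :: "'a::comm_ring_1"
  assumes "x + y = a" and "x * y = b * c"
  shows "det (mat n n (\<lambda>(i, j). tridiag a b c i j)) = (\<Sum>k\<le>n. x ^ k * y ^ (n - k))"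
proof -
  let ?D = "\<lambda>n. det (mat n n (\<lambda>(i, j). tridiag a b c i j))"
  let ?S = "\<lambda>n. \<Sum>k\<le>n. x ^ k * y ^ (n - k)"
  have "?D n = ?S n \<and> ?D (Suc n) = ?S (Suc n)"
  proof (induction n)
    case 0
    have "?D 0 = 1" by (simp add: det_def)
    moreover have "?D 1 = a" by (subst det_single) (auto simp: tridiag_def)
    ultimately show ?case using assms(1) by (simp add: add.commute)
  next
    case (Suc n)
    have "?D (Suc (Suc n)) = (x + y) * ?S (Suc n) - x * y * ?S n"
      using Suc.IH assms by (simp add: det_tridiag_Suc_Suc)
    also have "\<dots> = ?S (Suc (Suc n))"
      by (simp only: sum_power_mult_Suc) (simp add: algebra_simps)
    finally show ?case using Suc.IH by simp
  qed
  then show ?thesis ..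
qed

lemma sum_power_mult_eq_quotient:
  fixes x y :: "'a::field"
  assumes "x \<noteq> y"
  shows "(\<Sum>k\<le>n. x ^ k * y ^ (n - k)) = (x ^ Suc n - y ^ Suc n) / (x - y)"
proof -
  have "x ^ Suc n - y ^ Suc n = (x - y) * (\<Sum>k\<le>n. x ^ k * y ^ (n - k))"
    by (simp only: diff_power_eq_sum lessThan_Suc_atMost)
  then show ?thesis using assms by simp
qed

section \<open>The determinant of O\<close>

lemma O_mat_eq_block_mat:
  assumes W: "W \<in> carrier_mat d d"
  shows "O_mat d (Suc n) W = block_mat d n (\<lambda>a b. tridiag 2 (-1) (-1) a b \<cdot>\<^sub>m 1\<^sub>m d
    + tridiag 0 (- \<i>) \<i> a b \<cdot>\<^sub>m map_mat complex_of_real W)"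
proof (rule eq_matI)
  fix i j assume "i < dim_row (block_mat d n (\<lambda>a b. tridiag 2 (-1) (-1) a b \<cdot>\<^sub>m 1\<^sub>m d
    + tridiag 0 (- \<i>) \<i> a b \<cdot>\<^sub>m map_mat complex_of_real W))"
    "j < dim_col (block_mat d n (\<lambda>a b. tridiag 2 (-1) (-1) a b \<cdot>\<^sub>m 1\<^sub>m d
    + tridiag 0 (- \<i>) \<i> a b \<cdot>\<^sub>m map_mat complex_of_real W))"
  then have i: "i < n * d" and j: "j < n * d" by auto
  show "O_mat d (Suc n) W $$ (i, j) = block_mat d n (\<lambda>a b. tridiag 2 (-1) (-1) a b \<cdot>\<^sub>m 1\<^sub>m d
    + tridiag 0 (- \<i>) \<i> a b \<cdot>\<^sub>m map_mat complex_of_real W) $$ (i, j)"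
    using i j block_index_less[OF i] block_index_less[OF j] W
    by (auto simp: O_mat_def Let_def tridiag_def)
qed (simp_all add: O_mat_def)

lemma det_O_mat:
  assumes W: "W \<in> carrier_mat d d"
    and cp: "char_poly (map_mat complex_of_real W) = (\<Prod>e\<leftarrow>es. [:- e, 1:])"
  shows "det (O_mat d (Suc n) W) = (\<Prod>e\<leftarrow>es. \<Sum>k\<le>n. (1 + \<i> * e) ^ k * (1 - \<i> * e) ^ (n - k))"
proof -
  have "det (O_mat d (Suc n) W)
      = (\<Prod>e\<leftarrow>es. det (mat n n (\<lambda>(a, b). tridiag 2 (-1) (-1) a b + tridiag 0 (- \<i>) \<i> a b * e)))"
    unfolding O_mat_eq_block_mat[OF W] by (rule det_block_pencil) (use W cp in auto)
  also have "(\<lambda>e. det (mat n n (\<lambda>(a, b). tridiag 2 (-1) (-1) a b + tridiag 0 (- \<i>) \<i> a b * e)))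
      = (\<lambda>e. det (mat n n (\<lambda>(a, b). tridiag 2 (- 1 - \<i> * e) (- 1 + \<i> * e) a b)))"
    by (intro ext arg_cong[where f = det] cong_mat refl) (auto simp: tridiag_def)
  also have "\<dots> = (\<lambda>e. \<Sum>k\<le>n. (1 + \<i> * e) ^ k * (1 - \<i> * e) ^ (n - k))"
    by (intro ext det_tridiag) (simp_all add: algebra_simps)
  finally show ?thesis .
qed

lemma sum_power_mult_imaginary:
  fixes l :: real
  assumes "l \<noteq> 0" and "e = \<i> * complex_of_real l \<or> e = - (\<i> * complex_of_real l)"
  shows "(\<Sum>k\<le>n. (1 + \<i> * e) ^ k * (1 - \<i> * e) ^ (n - k))
    = complex_of_real (((1 + l) ^ Suc n - (1 - l) ^ Suc n) / (2 * l))"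
  using assms(2)
proof
  assume "e = \<i> * complex_of_real l"
  then have "(\<Sum>k\<le>n. (1 + \<i> * e) ^ k * (1 - \<i> * e) ^ (n - k))
      = complex_of_real (\<Sum>k\<le>n. (1 - l) ^ k * (1 + l) ^ (n - k))"
    by simp
  also have "(\<Sum>k\<le>n. (1 - l) ^ k * (1 + l) ^ (n - k)) = ((1 + l) ^ Suc n - (1 - l) ^ Suc n) / (2 * l)"
    using assms(1) by (subst sum_power_mult_eq_quotient) (auto simp: field_simps)
  finally show ?thesis .
next
  assume "e = - (\<i> * complex_of_real l)"
  then have "(\<Sum>k\<le>n. (1 + \<i> * e) ^ k * (1 - \<i> * e) ^ (n - k))
      = complex_of_real (\<Sum>k\<le>n. (1 + l) ^ k * (1 - l) ^ (n - k))"
    by simp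
  also have "(\<Sum>k\<le>n. (1 + l) ^ k * (1 - l) ^ (n - k)) = ((1 + l) ^ Suc n - (1 - l) ^ Suc n) / (2 * l)"
    using assms(1) by (subst sum_power_mult_eq_quotient) auto
  finally show ?thesis .
qed

lemma power_diff_quotient_pos:
  fixes l :: real
  assumes "l > 0"
  shows "((1 + l) ^ Suc n - (1 - l) ^ Suc n) / (2 * l) > 0"
proof -
  have "(1 - l) ^ Suc n \<le> \<bar>1 - l\<bar> ^ Suc n" by (metis power_abs abs_ge_self)
  also have "\<dots> < (1 + l) ^ Suc n" by (rule power_strict_mono) (use assms in auto)
  finally show ?thesis using assms by simp
qed

lemma sqrt_power_mult_square:
  fixes x y :: real
  assumes "x > 0" and "y \<ge> 0" and "2 * r \<le> d"
  shows "sqrt (x ^ (d - 2 * r) * y\<^sup>2) = x powr (real d / 2 - real r) * y"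
proof -
  have "(x powr (real d / 2 - real r))\<^sup>2 = x powr ((real d / 2 - real r) + (real d / 2 - real r))"
    unfolding power2_eq_square by (rule powr_add[symmetric])
  also have "(real d / 2 - real r) + (real d / 2 - real r) = real (d - 2 * r)"
    using assms(3) by (simp add: of_nat_diff)
  also have "x powr real (d - 2 * r) = x ^ (d - 2 * r)"
    using assms(1) by (rule powr_realpow)
  finally have "x ^ (d - 2 * r) * y\<^sup>2 = (x powr (real d / 2 - real r) * y)\<^sup>2"
    by (simp add: power_mult_distrib)
  then show ?thesis
    using assms(2) by simp
qed

lemma char_poly_imaginary_pairs:
  fixes A :: "complex mat" and \<mu> :: "nat \<Rightarrow> complex"
  assumes A: "A \<in> carrier_mat d d"
    and cp: "char_poly A = [:0, 1:] ^ (d - 2 * r) * (\<Prod>k<r. [:- \<mu> k, 1:] * [:\<mu> k, 1:])"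
  defines "es \<equiv> replicate (d - 2 * r) 0 @ map \<mu> [0..<r] @ map (\<lambda>k. - \<mu> k) [0..<r]"
  shows "char_poly A = (\<Prod>e\<leftarrow>es. [:- e, 1:])" and "2 * r \<le> d"
proof -
  have "(\<Prod>e\<leftarrow>es. [:- e, 1:]) = [:0, 1:] ^ (d - 2 * r) * (\<Prod>k<r. [:- \<mu> k, 1:]) * (\<Prod>k<r. [:\<mu> k, 1:])"
    unfolding es_def by (simp add: prod.distinct_set_conv_list[symmetric] atLeast0LessThan comp_def)
  then show cp_es: "char_poly A = (\<Prod>e\<leftarrow>es. [:- e, 1:])"
    by (simp only: cp prod.distrib mult.assoc)
  have "length es = d"
    using degree_monic_char_poly[OF A] degree_linear_factors[of uminus es] cp_es by simp
  then show "2 * r \<le> d"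
    unfolding es_def by simp
qed

lemma det_O_mat_imaginary_spectrum:
  fixes W :: "real mat" and lam :: "nat \<Rightarrow> real"
  assumes W: "W \<in> carrier_mat d d" and lam: "\<forall>k<r. lam k \<noteq> 0"
    and cp: "char_poly (map_mat complex_of_real W) = [:0, 1:] ^ (d - 2 * r) *
       (\<Prod>k<r. [:- (\<i> * complex_of_real (lam k)), 1:] * [:\<i> * complex_of_real (lam k), 1:])"
  shows "det (O_mat d (Suc n) W) = complex_of_real (real (Suc n) ^ (d - 2 * r) *
    (\<Prod>k<r. ((1 + lam k) ^ Suc n - (1 - lam k) ^ Suc n) / (2 * lam k))\<^sup>2)"
proof -
  define S where "S e = (\<Sum>k\<le>n. (1 + \<i> * e) ^ k * (1 - \<i> * e) ^ (n - k))" for e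
  define F where "F k = ((1 + lam k) ^ Suc n - (1 - lam k) ^ Suc n) / (2 * lam k)" for k
  have S_pair: "S (\<i> * complex_of_real (lam k)) = complex_of_real (F k)"
    "S (- (\<i> * complex_of_real (lam k))) = complex_of_real (F k)" if "k < r" for k
    unfolding S_def F_def by (rule sum_power_mult_imaginary; use lam that in simp)+
  have "det (O_mat d (Suc n) W)
      = S 0 ^ (d - 2 * r) * (\<Prod>k<r. S (\<i> * complex_of_real (lam k))) * (\<Prod>k<r. S (- (\<i> * complex_of_real (lam k))))"
    using det_O_mat[OF W char_poly_imaginary_pairs(1)[OF _ cp]] W
    by (simp add: S_def prod.distinct_set_conv_list[symmetric] atLeast0LessThan)
  also have "\<dots> = of_nat (Suc n) ^ (d - 2 * r) * (\<Prod>k<r. complex_of_real (F k)) * (\<Prod>k<r. complex_of_real (F k))"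
  proof -
    have "(\<Prod>k<r. S (\<i> * complex_of_real (lam k))) = (\<Prod>k<r. complex_of_real (F k))"
      "(\<Prod>k<r. S (- (\<i> * complex_of_real (lam k)))) = (\<Prod>k<r. complex_of_real (F k))"
      by (rule prod.cong; simp add: S_pair)+
    then show ?thesis by (simp add: S_def[of 0])
  qed
  also have "\<dots> = complex_of_real (real (Suc n) ^ (d - 2 * r) * (\<Prod>k<r. F k)\<^sup>2)"
    by (simp add: power2_eq_square)
  finally show ?thesis by (simp add: F_def)
qed

theorem mainTheorem16:
  fixes d m r :: nat and G H W :: "real mat" and lam :: "nat \<Rightarrow> real"
  assumes "m \<ge> 2"
    and G_carrier: "G \<in> carrier_mat d d" and G_sym: "transpose_mat G = G"
    and G_posdef: "\<forall>v \<in> carrier_vec d. v \<noteq> 0\<^sub>v d \<longrightarrow> v \<bullet> (G *\<^sub>v v) > 0"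
    and H_carrier: "H \<in> carrier_mat d d" and H_skew: "transpose_mat H = - H"
    and W_carrier: "W \<in> carrier_mat d d" and W_def: "G * W = H"
    and lam_pos: "\<forall>k < r. lam k > 0"
    and eigs: "char_poly (map_mat complex_of_real W) =
       [:0, 1:] ^ (d - 2 * r) * (\<Prod>k<r. [:- (\<i> * complex_of_real (lam k)), 1:] * [:\<i> * complex_of_real (lam k), 1:])"
  shows "Im (det (O_mat d m W)) = 0 \<and> Re (det (O_mat d m W)) \<ge> 0 \<and>
    sqrt (Re (det (O_mat d m W))) =
      real m powr (real d / 2 - real r) *
      (\<Prod>k<r. ((1 + lam k) ^ m - (1 - lam k) ^ m) / (2 * lam k))"
proof -
  (* G and H only explain why the spectrum of W is purely imaginary; eigs already records it. *)
  obtain n where m: "m = Suc n"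
    using \<open>m \<ge> 2\<close> by (cases m) auto
  define F where "F k = ((1 + lam k) ^ m - (1 - lam k) ^ m) / (2 * lam k)" for k
  have "2 * r \<le> d"
    using char_poly_imaginary_pairs(2)[OF _ eigs] W_carrier by simp
  have det: "det (O_mat d m W) = complex_of_real (real m ^ (d - 2 * r) * (\<Prod>k<r. F k)\<^sup>2)"
    unfolding m F_def using W_carrier lam_pos eigs by (intro det_O_mat_imaginary_spectrum) auto
  have "(\<Prod>k<r. F k) > 0"
    using lam_pos power_diff_quotient_pos by (auto simp: F_def m intro: prod_pos)
  moreover have "real m > 0"
    using m by simp
  ultimately show ?thesis
    unfolding det F_def[symmetric] Re_complex_of_real Im_complex_of_real
    using sqrt_power_mult_square[OF _ _ \<open>2 * r \<le> d\<close>] by simp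
qed

end
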